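(* If $\varphi\in\mathrm{maxHML}$ (resp. $\varphi\in\mathrm{minHML}$) is closed, then there is some $\psi\in\mathrm{sHML}$ (resp. $\psi\in\mathrm{cHML}$) such that $[\![\psi]\!]_L=[\![\varphi]\!]_L$.
   Context: Fix a finite set $\mathrm{Act}$ of actions. recHML formulae: $\varphi::=\mathrm{tt}\mid\mathrm{ff}\mid\varphi\vee\varphi\mid\varphi\wedge\varphi\mid\langle A\rangle\varphi\mid[A]\varphi\mid\min X.\varphi\mid\max X.\varphi\mid X$ ($A\subseteq\mathrm{Act}$), guarded. Fragments: $\mathrm{maxHML}$: $\varphi::=\mathrm{tt}\mid\mathrm{ff}\mid[A]\varphi\mid\langle A\rangle\varphi\mid\varphi\vee\varphi\mid\varphi\wedge\varphi\mid\max X.\varphi\mid X$; $\mathrm{minHML}$: $\varphi::=\mathrm{tt}\mid\mathrm{ff}\mid[A]\varphi\mid\langle A\rangle\varphi\mid\varphi\vee\varphi\mid\varphi\wedge\varphi\mid\min X.\varphi\mid X$; $\mathrm{sHML}$: $\varphi::=\mathrm{tt}\mid\mathrm{ff}\mid[A]\varphi\mid\varphi\wedge\varphi\mid\max X.\varphi\mid X$; $\mathrm{cHML}$: $\varphi::=\mathrm{tt}\mid\mathrm{ff}\mid\langle A\rangle\varphi\mid\varphi\vee\varphi\mid\min X.\varphi\mid X$. Linear-time semantics over infinite traces $\mathrm{Trc}=\mathrm{Act}^\omega$: $[\![\mathrm{tt}]\!]_L=\mathrm{Trc}$, $[\![\mathrm{ff}]\!]_L=\emptyset$, $\vee,\wedge$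 union/intersection, $[\![\langle A\rangle\varphi,\sigma]\!]_L=\{at\mid a\in A,t\in[\![\varphi,\sigma]\!]_L\}$, $[\![[A]\varphi,\sigma]\!]_L=\{t\mid\forall a\in A,\forall t'.\ t=at'\Rightarrow t'\in[\![\varphi,\sigma]\!]_L\}$, $[\![\min X.\varphi,\sigma]\!]_L=\bigcap\{S\mid[\![\varphi,\sigma[X\mapsto S]]\!]_L\subseteq S\}$, $[\![\max X.\varphi,\sigma]\!]_L=\bigcup\{S\mid S\subseteq[\![\varphi,\sigma[X\mapsto S]]\!]_L\}$, $[\![X,\sigma]\!]_L=\sigma(X)$. *)

theory Defs
  imports Main "HOL-Library.Stream"
begin

text \<open>recHML formulae over actions of type 'a (a finite type = the finite set Act);
  recursion variables are natural numbers.\<close>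

datatype 'a hml =
    TT | FF
  | Or "'a hml" "'a hml"
  | And "'a hml" "'a hml"
  | Dia "'a set" "'a hml"
  | Box "'a set" "'a hml"
  | Min nat "'a hml"
  | Max nat "'a hml"
  | Var nat

fun fv :: "'a hml \<Rightarrow> nat set" where
  "fv TT = {}" | "fv FF = {}"
| "fv (Or p q) = fv p \<union> fv q" | "fv (And p q) = fv p \<union> fv q"
| "fv (Dia A p) = fv p" | "fv (Box A p) = fv p"
| "fv (Min X p) = fv p - {X}" | "fv (Max X p) = fv p - {X}"
| "fv (Var X) = {X}"

definition closed :: "'a hml \<Rightarrow> bool" where
  "closed p \<longleftrightarrow> fv p = {}"

fun ufv :: "'a hml \<Rightarrow> nat set" where
  "ufv TT = {}" | "ufv FF = {}"
| "ufv (Or p q) = ufv p \<union> ufv q" | "ufv (And p q) = ufv p \<union> ufv q"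
| "ufv (Dia A p) = {}" | "ufv (Box A p) = {}"
| "ufv (Min X p) = ufv p - {X}" | "ufv (Max X p) = ufv p - {X}"
| "ufv (Var X) = {X}"

fun guarded :: "'a hml \<Rightarrow> bool" where
  "guarded TT = True" | "guarded FF = True"
| "guarded (Or p q) = (guarded p \<and> guarded q)" | "guarded (And p q) = (guarded p \<and> guarded q)"
| "guarded (Dia A p) = guarded p" | "guarded (Box A p) = guarded p"
| "guarded (Min X p) = (guarded p \<and> X \<notin> ufv p)"
| "guarded (Max X p) = (guarded p \<and> X \<notin> ufv p)"
| "guarded (Var X) = True"

fun maxHML :: "'a hml \<Rightarrow> bool" where
  "maxHML TT = True" | "maxHML FF = True"
| "maxHML (Or p q) = (maxHML p \<and> maxHML q)" | "maxHML (And p q) = (maxHML p \<and> maxHML q)"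
| "maxHML (Dia A p) = maxHML p" | "maxHML (Box A p) = maxHML p"
| "maxHML (Min X p) = False" | "maxHML (Max X p) = maxHML p"
| "maxHML (Var X) = True"

fun minHML :: "'a hml \<Rightarrow> bool" where
  "minHML TT = True" | "minHML FF = True"
| "minHML (Or p q) = (minHML p \<and> minHML q)" | "minHML (And p q) = (minHML p \<and> minHML q)"
| "minHML (Dia A p) = minHML p" | "minHML (Box A p) = minHML p"
| "minHML (Min X p) = minHML p" | "minHML (Max X p) = False"
| "minHML (Var X) = True"

fun sHML :: "'a hml \<Rightarrow> bool" where
  "sHML TT = True" | "sHML FF = True"
| "sHML (Or p q) = False" | "sHML (And p q) = (sHML p \<and> sHML q)"
| "sHML (Dia A p) = False" | "sHML (Box A p) = sHML p"
| "sHML (Min X p) = False" | "sHML (Max X p) = sHML p"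
| "sHML (Var X) = True"

fun cHML :: "'a hml \<Rightarrow> bool" where
  "cHML TT = True" | "cHML FF = True"
| "cHML (Or p q) = (cHML p \<and> cHML q)" | "cHML (And p q) = False"
| "cHML (Dia A p) = cHML p" | "cHML (Box A p) = False"
| "cHML (Min X p) = cHML p" | "cHML (Max X p) = False"
| "cHML (Var X) = True"

fun semL :: "'a hml \<Rightarrow> (nat \<Rightarrow> 'a stream set) \<Rightarrow> 'a stream set" where
  "semL TT \<sigma> = UNIV"
| "semL FF \<sigma> = {}"
| "semL (Or p q) \<sigma> = semL p \<sigma> \<union> semL q \<sigma>"
| "semL (And p q) \<sigma> = semL p \<sigma> \<inter> semL q \<sigma>"
| "semL (Dia A p) \<sigma> = {a ## t | a t. a \<in> A \<and> t \<in> semL p \<sigma>}"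
| "semL (Box A p) \<sigma> = {t. \<forall>a\<in>A. \<forall>t'. t = a ## t' \<longrightarrow> t' \<in> semL p \<sigma>}"
| "semL (Min X p) \<sigma> = \<Inter>{S. semL p (\<sigma>(X := S)) \<subseteq> S}"
| "semL (Max X p) \<sigma> = \<Union>{S. S \<subseteq> semL p (\<sigma>(X := S))}"
| "semL (Var X) \<sigma> = \<sigma> X"

text \<open>Semantics of closed formulae (the environment is irrelevant; we use the empty one).\<close>
definition semC :: "'a hml \<Rightarrow> 'a stream set" where
  "semC p = semL p (\<lambda>_. {})"

end

theory Submission
  imports Defs
begin

text \<open>A closed maxHML formula denotes a safety set, i.e. a set closed in the prefix topology on
  traces: if the body of a greatest fixpoint preserves safety, the prefix closure of the fixpoint is
  again a post-fixed point. By guardedness, every closed formula moreover has only finitely many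
  residuals \<open>a\<^sup>-\<^sup>1L = {t. a ## t \<in> L}\<close>, all in the finite lattice generated by the
  denotations of its subformulas. A safety set \<open>L\<close> with finitely many residuals is denoted by the
  sHML formula read off its residual automaton,
  \<open>\<psi>\<^sub>S = max X\<^sub>S. \<And>\<^sub>a [a] \<psi>\<^bsub>a\<^sup>-\<^sup>1S\<^esub>\<close> (and \<open>ff\<close> for \<open>S = {}\<close>): \<open>L\<close> is a post-fixed point
  of the body, and conversely every finite prefix of a trace satisfying \<open>\<psi>\<^sub>L\<close> extends into \<open>L\<close>,
  so the trace is in \<open>L\<close>. The minHML case follows by negation duality.\<close>

section \<open>Fixpoint semantics\<close>

lemma semL_Dia [simp]: "semL (Dia A p) \<sigma> = {t. shd t \<in> A \<and> stl t \<in> semL p \<sigma>}"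
  by auto (metis stream.collapse)

lemma semL_Box [simp]: "semL (Box A p) \<sigma> = {t. shd t \<in> A \<longrightarrow> stl t \<in> semL p \<sigma>}"
  by auto

declare semL.simps(5,6) [simp del]

lemma semL_cong: "(\<And>X. X \<in> fv p \<Longrightarrow> \<sigma> X = \<sigma>' X) \<Longrightarrow> semL p \<sigma> = semL p \<sigma>'"
proof (induction p arbitrary: \<sigma> \<sigma>')
  case (Min X p)
  have "semL p (\<sigma>(X := S)) = semL p (\<sigma>'(X := S))" for S using Min.prems by (intro Min.IH) auto
  then show ?case by simp
next
  case (Max X p)
  have "semL p (\<sigma>(X := S)) = semL p (\<sigma>'(X := S))" for S using Max.prems by (intro Max.IH) auto
  then show ?case by simp
next
  case (Or p q)
  show ?case using Or.prems Or.IH[of \<sigma> \<sigma>'] by simp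
next
  case (And p q)
  show ?case using And.prems And.IH[of \<sigma> \<sigma>'] by simp
next
  case (Dia A p)
  show ?case using Dia.prems Dia.IH[of \<sigma> \<sigma>'] by simp
next
  case (Box A p)
  show ?case using Box.prems Box.IH[of \<sigma> \<sigma>'] by simp
qed simp_all

lemma semL_mono: "(\<And>X. \<sigma> X \<subseteq> \<sigma>' X) \<Longrightarrow> semL p \<sigma> \<subseteq> semL p \<sigma>'"
proof (induction p arbitrary: \<sigma> \<sigma>')
  case (Min X p)
  have "semL p (\<sigma>(X := S)) \<subseteq> semL p (\<sigma>'(X := S))" for S using Min.prems by (intro Min.IH) auto
  then show ?case by (simp only: semL.simps) (intro Inter_anti_mono, blast)
next
  case (Max X p)
  have "semL p (\<sigma>(X := S)) \<subseteq> semL p (\<sigma>'(X := S))" for S using Max.prems by (intro Max.IH) auto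
  then show ?case by (simp only: semL.simps) (intro Union_mono, blast)
next
  case (Or p q)
  show ?case using Or.prems Or.IH[of \<sigma> \<sigma>'] by auto
next
  case (And p q)
  show ?case using And.prems And.IH[of \<sigma> \<sigma>'] by auto
next
  case (Dia A p)
  show ?case using Dia.prems Dia.IH[of \<sigma> \<sigma>'] by auto
next
  case (Box A p)
  show ?case using Box.prems Box.IH[of \<sigma> \<sigma>'] by auto
qed auto

lemma mono_semL_update: "mono (\<lambda>S. semL p (\<sigma>(X := S)))"
  by (rule monoI, rule semL_mono) simp

lemma semL_Min_unfold: "semL (Min X p) \<sigma> = semL p (\<sigma>(X := semL (Min X p) \<sigma>))"
  using lfp_unfold[OF mono_semL_update] by (simp add: lfp_def)

lemma semL_Max_unfold: "semL (Max X p) \<sigma> = semL p (\<sigma>(X := semL (Max X p) \<sigma>))"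
  using gfp_unfold[OF mono_semL_update] by (simp add: gfp_def)

section \<open>Negation duality\<close>

fun dual :: "'a hml \<Rightarrow> 'a hml" where
  "dual TT = FF" | "dual FF = TT"
| "dual (Or p q) = And (dual p) (dual q)" | "dual (And p q) = Or (dual p) (dual q)"
| "dual (Dia A p) = Box A (dual p)" | "dual (Box A p) = Dia A (dual p)"
| "dual (Min X p) = Max X (dual p)" | "dual (Max X p) = Min X (dual p)"
| "dual (Var X) = Var X"

lemma fv_dual [simp]: "fv (dual p) = fv p"
  by (induction p) auto

lemma ufv_dual [simp]: "ufv (dual p) = ufv p"
  by (induction p) auto

lemma guarded_dual [simp]: "guarded (dual p) = guarded p"
  by (induction p) auto

lemma closed_dual [simp]: "closed (dual p) = closed p"
  by (simp add: closed_def)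

lemma maxHML_dual [simp]: "maxHML (dual p) = minHML p"
  by (induction p) auto

lemma cHML_dual [simp]: "cHML (dual p) = sHML p"
  by (induction p) auto

lemma Union_postfixpoints_compl: "\<Union>{S. S \<subseteq> - f (- S)} = - \<Inter>{S. f S \<subseteq> S}"
proof (intro equalityI subsetI)
  fix x assume "x \<in> \<Union>{S. S \<subseteq> - f (- S)}"
  then obtain T where "x \<in> T" "f (- T) \<subseteq> - T" by blast
  then show "x \<in> - \<Inter>{S. f S \<subseteq> S}" by blast
next
  fix x assume "x \<in> - \<Inter>{S. f S \<subseteq> S}"
  then obtain T where "x \<notin> T" "f T \<subseteq> T" by blast
  then show "x \<in> \<Union>{S. S \<subseteq> - f (- S)}" by (intro UnionI[of "- T"]) auto
qed

lemma Inter_prefixpoints_compl: "\<Inter>{S. - f (- S) \<subseteq> S} = - \<Union>{S. S \<subseteq> f S}"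
  using Union_postfixpoints_compl[of "\<lambda>S. - f (- S)"] by (simp only: double_compl)

lemma compl_fun_upd:
  fixes \<sigma> :: "'x \<Rightarrow> 'b::boolean_algebra"
  shows "(\<lambda>Y. - \<sigma> Y)(X := S) = (\<lambda>Y. - (\<sigma>(X := - S)) Y)"
  by (simp add: fun_eq_iff)

lemma semL_dual: "semL (dual p) (\<lambda>X. - \<sigma> X) = - semL p \<sigma>"
proof (induction p arbitrary: \<sigma>)
  case (Min X p)
  show ?case
    using Union_postfixpoints_compl[of "\<lambda>S. semL p (\<sigma>(X := S))"]
    by (simp only: dual.simps semL.simps compl_fun_upd Min.IH)
next
  case (Max X p)
  show ?case
    using Inter_prefixpoints_compl[of "\<lambda>S. semL p (\<sigma>(X := S))"]
    by (simp only: dual.simps semL.simps compl_fun_upd Max.IH)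
qed auto

lemma semC_dual: "closed p \<Longrightarrow> semC (dual p) = - semC p"
proof -
  assume "closed p"
  then have "semL p (\<lambda>_. UNIV) = semC p"
    unfolding semC_def closed_def by (intro semL_cong) auto
  then show ?thesis
    using semL_dual[of p "\<lambda>_. UNIV"] by (simp add: semC_def)
qed

section \<open>Residuals and safety\<close>

definition residual :: "'a \<Rightarrow> 'a stream set \<Rightarrow> 'a stream set" where
  "residual a S = {t. a ## t \<in> S}"

lemma residual_Collect [simp]: "residual a {t. P t} = {t. P (a ## t)}"
  by (simp add: residual_def)

lemma residual_simps [simp]:
  "residual a UNIV = UNIV" "residual a {} = {}"
  "residual a (S \<union> T) = residual a S \<union> residual a T"
  "residual a (S \<inter> T) = residual a S \<inter> residual a T"
  by (auto simp: residual_def)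

definition cylinder :: "nat \<Rightarrow> 'a stream set \<Rightarrow> 'a stream set" where
  "cylinder n S = {t. \<exists>u\<in>S. stake n u = stake n t}"

definition prefix_closure :: "'a stream set \<Rightarrow> 'a stream set" where
  "prefix_closure S = (\<Inter>n. cylinder n S)"

definition safety :: "'a stream set \<Rightarrow> bool" where
  "safety S \<longleftrightarrow> prefix_closure S \<subseteq> S"

lemma cylinder_0: "cylinder 0 S = (if S = {} then {} else UNIV)"
  by (auto simp: cylinder_def)

lemma mem_cylinder_Suc: "t \<in> cylinder (Suc n) S \<longleftrightarrow> stl t \<in> cylinder n (residual (shd t) S)"
proof
  assume "t \<in> cylinder (Suc n) S"
  then obtain u where u: "u \<in> S" "stake (Suc n) u = stake (Suc n) t"
    unfolding cylinder_def by blast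
  then have "stl u \<in> residual (shd t) S"
    using stream.collapse[of u] by (simp add: residual_def)
  then show "stl t \<in> cylinder n (residual (shd t) S)"
    using u(2) unfolding cylinder_def by auto
next
  assume "stl t \<in> cylinder n (residual (shd t) S)"
  then obtain u where "shd t ## u \<in> S" "stake n u = stake n (stl t)"
    unfolding cylinder_def residual_def by blast
  then show "t \<in> cylinder (Suc n) S"
    unfolding cylinder_def by (intro CollectI bexI[of _ "shd t ## u"]) auto
qed

lemma cylinder_antimono: "m \<le> n \<Longrightarrow> cylinder n S \<subseteq> cylinder m S"
  unfolding cylinder_def by (auto, metis min.absorb1 take_stake)

lemma cylinder_Un: "cylinder n (S \<union> T) = cylinder n S \<union> cylinder n T"
  by (auto simp: cylinder_def)

lemma cylinder_mono: "S \<subseteq> T \<Longrightarrow> cylinder n S \<subseteq> cylinder n T"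
  by (auto simp: cylinder_def)

lemma subset_prefix_closure: "S \<subseteq> prefix_closure S"
  by (auto simp: prefix_closure_def cylinder_def)

lemma prefix_closure_mono: "S \<subseteq> T \<Longrightarrow> prefix_closure S \<subseteq> prefix_closure T"
  unfolding prefix_closure_def by (intro INF_superset_mono cylinder_mono) simp_all

lemma safety_prefix_closure: "safety (prefix_closure S)"
  unfolding safety_def
proof
  fix t assume t: "t \<in> prefix_closure (prefix_closure S)"
  show "t \<in> prefix_closure S"
    unfolding prefix_closure_def
  proof
    fix n
    from t have "t \<in> cylinder n (prefix_closure S)"
      unfolding prefix_closure_def by blast
    then obtain u where u: "u \<in> prefix_closure S" "stake n u = stake n t"
      unfolding cylinder_def by blast
    from u(1) obtain v where "v \<in> S" "stake n v = stake n u"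
      unfolding prefix_closure_def cylinder_def by blast
    with u(2) show "t \<in> cylinder n S"
      unfolding cylinder_def by auto
  qed
qed

lemma mem_prefix_closure_residual:
  "t \<in> prefix_closure S \<longleftrightarrow> stl t \<in> prefix_closure (residual (shd t) S)"
proof -
  have "cylinder (Suc n) S \<subseteq> cylinder n S" for n
    by (simp add: cylinder_antimono)
  then have "(\<forall>n. t \<in> cylinder n S) \<longleftrightarrow> (\<forall>n. t \<in> cylinder (Suc n) S)"
    by (meson subsetD)
  then show ?thesis
    unfolding prefix_closure_def by (simp add: mem_cylinder_Suc)
qed

lemma safety_if_residuals_safety:
  assumes "\<And>a. safety (residual a S)"
  shows "safety S"
  unfolding safety_def
proof
  fix t assume "t \<in> prefix_closure S"
  then have "stl t \<in> prefix_closure (residual (shd t) S)"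
    by (rule mem_prefix_closure_residual[THEN iffD1])
  then have "stl t \<in> residual (shd t) S"
    using assms[of "shd t"] unfolding safety_def by blast
  then show "t \<in> S"
    by (simp add: residual_def)
qed

lemma safety_UNIV: "safety UNIV"
  by (simp add: safety_def)

lemma safety_empty: "safety {}"
proof -
  have "prefix_closure {} \<subseteq> cylinder 0 {}"
    unfolding prefix_closure_def by (rule INT_lower) simp
  then show ?thesis
    by (simp add: safety_def cylinder_0)
qed

lemma safety_Int: "safety S \<Longrightarrow> safety T \<Longrightarrow> safety (S \<inter> T)"
  unfolding safety_def using prefix_closure_mono[of "S \<inter> T" S] prefix_closure_mono[of "S \<inter> T" T]
  by blast

lemma safety_Un:
  assumes "safety S" "safety T"
  shows "safety (S \<union> T)"
  unfolding safety_def
proof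
  fix t assume t: "t \<in> prefix_closure (S \<union> T)"
  show "t \<in> S \<union> T"
  proof (rule ccontr)
    assume "t \<notin> S \<union> T"
    then have "t \<notin> prefix_closure S" "t \<notin> prefix_closure T"
      using assms unfolding safety_def by auto
    then obtain m n where "t \<notin> cylinder m S" "t \<notin> cylinder n T"
      unfolding prefix_closure_def by auto
    then have "t \<notin> cylinder (max m n) (S \<union> T)"
      using cylinder_antimono[of m "max m n" S] cylinder_antimono[of n "max m n" T]
      by (auto simp: cylinder_Un)
    with t show False
      unfolding prefix_closure_def by auto
  qed
qed

lemma safety_Dia:
  assumes "safety P"
  shows "safety {t. shd t \<in> A \<and> stl t \<in> P}"
proof (rule safety_if_residuals_safety)
  show "safety (residual a {t. shd t \<in> A \<and> stl t \<in> P})" for a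
    using assms by (cases "a \<in> A") (simp_all add: safety_empty)
qed

lemma safety_Box:
  assumes "safety P"
  shows "safety {t. shd t \<in> A \<longrightarrow> stl t \<in> P}"
proof (rule safety_if_residuals_safety)
  show "safety (residual a {t. shd t \<in> A \<longrightarrow> stl t \<in> P})" for a
    using assms by (cases "a \<in> A") (simp_all add: safety_UNIV)
qed

lemma safety_semL: "maxHML p \<Longrightarrow> (\<And>X. safety (\<sigma> X)) \<Longrightarrow> safety (semL p \<sigma>)"
proof (induction p arbitrary: \<sigma>)
  case (Or p q)
  show ?case using Or.prems Or.IH[of \<sigma>] by (simp add: safety_Un)
next
  case (And p q)
  show ?case using And.prems And.IH[of \<sigma>] by (simp add: safety_Int)
next
  case (Dia A p)
  show ?case using Dia.prems Dia.IH[of \<sigma>] by (simp add: safety_Dia)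
next
  case (Box A p)
  show ?case using Box.prems Box.IH[of \<sigma>] by (simp add: safety_Box)
next
  case (Max X p)
  define f where "f S = semL p (\<sigma>(X := S))" for S
  define M where "M = semL (Max X p) \<sigma>"
  have "safety (f (prefix_closure M))"
    unfolding f_def using Max.prems
    by (intro Max.IH) (auto simp: safety_prefix_closure)
  moreover have "M = f M"
    unfolding f_def M_def by (rule semL_Max_unfold)
  moreover have "f M \<subseteq> f (prefix_closure M)"
    unfolding f_def by (intro semL_mono) (simp add: subset_prefix_closure)
  ultimately have "prefix_closure M \<subseteq> f (prefix_closure M)"
    unfolding safety_def by (metis prefix_closure_mono subset_trans)
  then have "prefix_closure M \<subseteq> M"
    unfolding M_def f_def by auto
  then show ?case
    unfolding M_def safety_def .
qed (simp_all add: safety_UNIV safety_empty)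

section \<open>Finitely many residuals\<close>

inductive_set lattice_span :: "'a set set \<Rightarrow> 'a set set" for G where
  base: "S \<in> G \<Longrightarrow> S \<in> lattice_span G"
| top: "UNIV \<in> lattice_span G"
| bot: "{} \<in> lattice_span G"
| union: "S \<in> lattice_span G \<Longrightarrow> T \<in> lattice_span G \<Longrightarrow> S \<union> T \<in> lattice_span G"
| inter: "S \<in> lattice_span G \<Longrightarrow> T \<in> lattice_span G \<Longrightarrow> S \<inter> T \<in> lattice_span G"

lemma lattice_span_mono: "G \<subseteq> H \<Longrightarrow> lattice_span G \<subseteq> lattice_span H"
proof
  fix S assume "S \<in> lattice_span G" "G \<subseteq> H"
  then show "S \<in> lattice_span H"
    by (induction rule: lattice_span.induct) (auto intro: lattice_span.intros)
qed

lemma lattice_span_normal_form: "S \<in> lattice_span G \<Longrightarrow> \<exists>C \<subseteq> Pow G. S = \<Union>(Inter ` C)"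
proof (induction rule: lattice_span.induct)
  case (base S)
  then show ?case by (intro exI[of _ "{{S}}"]) auto
next
  case top
  then show ?case by (intro exI[of _ "{{}}"]) auto
next
  case bot
  then show ?case by (intro exI[of _ "{}"]) auto
next
  case (union S T)
  then obtain C D where "C \<subseteq> Pow G" "S = \<Union>(Inter ` C)" "D \<subseteq> Pow G" "T = \<Union>(Inter ` D)"
    by blast
  then show ?case by (intro exI[of _ "C \<union> D"]) auto
next
  case (inter S T)
  then obtain C D where C: "C \<subseteq> Pow G" "S = \<Union>(Inter ` C)" and D: "D \<subseteq> Pow G" "T = \<Union>(Inter ` D)"
    by blast
  define E where "E = {c \<union> d | c d. c \<in> C \<and> d \<in> D}"
  have "S \<inter> T = \<Union>(Inter ` E)"
  proof (intro equalityI subsetI)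
    fix x assume "x \<in> S \<inter> T"
    then obtain c d where "c \<in> C" "d \<in> D" "x \<in> \<Inter>c" "x \<in> \<Inter>d"
      using C(2) D(2) by blast
    then show "x \<in> \<Union>(Inter ` E)"
      unfolding E_def by blast
  next
    fix x assume "x \<in> \<Union>(Inter ` E)"
    then obtain c d where "c \<in> C" "d \<in> D" "x \<in> \<Inter>(c \<union> d)"
      unfolding E_def by blast
    then show "x \<in> S \<inter> T"
      using C(2) D(2) by blast
  qed
  moreover have "E \<subseteq> Pow G"
    unfolding E_def using C(1) D(1) by blast
  ultimately show ?case by blast
qed

lemma finite_lattice_span: "finite G \<Longrightarrow> finite (lattice_span G)"
proof -
  assume "finite G"
  have "lattice_span G \<subseteq> (\<lambda>C. \<Union>(Inter ` C)) ` Pow (Pow G)"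
  proof
    fix S assume "S \<in> lattice_span G"
    then obtain C where "C \<subseteq> Pow G" "S = \<Union>(Inter ` C)"
      using lattice_span_normal_form by blast
    then show "S \<in> (\<lambda>C. \<Union>(Inter ` C)) ` Pow (Pow G)"
      by blast
  qed
  moreover have "finite ((\<lambda>C. \<Union>(Inter ` C)) ` Pow (Pow G))"
    using \<open>finite G\<close> by simp
  ultimately show ?thesis
    by (rule finite_subset)
qed

lemma residual_lattice_span:
  assumes "S \<in> lattice_span G" "\<And>T. T \<in> G \<Longrightarrow> residual a T \<in> lattice_span H"
  shows "residual a S \<in> lattice_span H"
  using assms by (induction rule: lattice_span.induct) (simp_all add: lattice_span.intros)

fun subformula_sems :: "'a hml \<Rightarrow> (nat \<Rightarrow> 'a stream set) \<Rightarrow> 'a stream set set" where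
  "subformula_sems TT \<rho> = {UNIV}"
| "subformula_sems FF \<rho> = {{}}"
| "subformula_sems (Or p q) \<rho> = insert (semL (Or p q) \<rho>) (subformula_sems p \<rho> \<union> subformula_sems q \<rho>)"
| "subformula_sems (And p q) \<rho> = insert (semL (And p q) \<rho>) (subformula_sems p \<rho> \<union> subformula_sems q \<rho>)"
| "subformula_sems (Dia A p) \<rho> = insert (semL (Dia A p) \<rho>) (subformula_sems p \<rho>)"
| "subformula_sems (Box A p) \<rho> = insert (semL (Box A p) \<rho>) (subformula_sems p \<rho>)"
| "subformula_sems (Min X p) \<rho> =
     insert (semL (Min X p) \<rho>) (subformula_sems p (\<rho>(X := semL (Min X p) \<rho>)))"
| "subformula_sems (Max X p) \<rho> =
     insert (semL (Max X p) \<rho>) (subformula_sems p (\<rho>(X := semL (Max X p) \<rho>)))"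
| "subformula_sems (Var X) \<rho> = {\<rho> X}"

lemma semL_in_subformula_sems: "semL p \<rho> \<in> subformula_sems p \<rho>"
  by (cases p) auto

lemma finite_subformula_sems: "finite (subformula_sems p \<rho>)"
  by (induction p arbitrary: \<rho>) auto

lemma ufv_subset_fv: "ufv p \<subseteq> fv p"
  by (induction p) auto

text \<open>Guardedness makes the induction go through: the variable bound by a fixpoint occurs in its
  body only under a modality, so the residuals of the (yet unknown) fixpoint value are not needed.\<close>

lemma residual_semL_in_lattice_span:
  assumes "guarded q" and "\<And>X a. X \<in> ufv q \<Longrightarrow> residual a (\<rho> X) \<in> lattice_span G"
  shows "residual a (semL q \<rho>) \<in> lattice_span (G \<union> subformula_sems q \<rho>)"
  using assms
proof (induction q arbitrary: \<rho>)
  case (Or p q)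
  let ?H = "G \<union> subformula_sems (Or p q) \<rho>"
  have "residual a (semL p \<rho>) \<in> lattice_span (G \<union> subformula_sems p \<rho>)"
    "residual a (semL q \<rho>) \<in> lattice_span (G \<union> subformula_sems q \<rho>)"
    by (rule Or.IH; use Or.prems in auto)+
  moreover have "lattice_span (G \<union> subformula_sems p \<rho>) \<subseteq> lattice_span ?H"
    "lattice_span (G \<union> subformula_sems q \<rho>) \<subseteq> lattice_span ?H"
    by (auto intro!: lattice_span_mono)
  ultimately show ?case
    by (auto intro: lattice_span.union)
next
  case (And p q)
  let ?H = "G \<union> subformula_sems (And p q) \<rho>"
  have "residual a (semL p \<rho>) \<in> lattice_span (G \<union> subformula_sems p \<rho>)"
    "residual a (semL q \<rho>) \<in> lattice_span (G \<union> subformula_sems q \<rho>)"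
    by (rule And.IH; use And.prems in auto)+
  moreover have "lattice_span (G \<union> subformula_sems p \<rho>) \<subseteq> lattice_span ?H"
    "lattice_span (G \<union> subformula_sems q \<rho>) \<subseteq> lattice_span ?H"
    by (auto intro!: lattice_span_mono)
  ultimately show ?case
    by (auto intro: lattice_span.inter)
next
  case (Dia A p)
  have "semL p \<rho> \<in> lattice_span (G \<union> subformula_sems (Dia A p) \<rho>)"
    using semL_in_subformula_sems[of p \<rho>] by (auto intro: lattice_span.base)
  then show ?case
    by (cases "a \<in> A") (simp_all add: lattice_span.bot)
next
  case (Box A p)
  have "semL p \<rho> \<in> lattice_span (G \<union> subformula_sems (Box A p) \<rho>)"
    using semL_in_subformula_sems[of p \<rho>] by (auto intro: lattice_span.base)
  then show ?case
    by (cases "a \<in> A") (simp_all add: lattice_span.top)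
next
  case (Min X p)
  define M where "M = semL (Min X p) \<rho>"
  have "residual a (semL p (\<rho>(X := M))) \<in> lattice_span (G \<union> subformula_sems p (\<rho>(X := M)))"
    by (rule Min.IH) (use Min.prems in auto)
  moreover have "lattice_span (G \<union> subformula_sems p (\<rho>(X := M)))
      \<subseteq> lattice_span (G \<union> subformula_sems (Min X p) \<rho>)"
    unfolding M_def by (auto intro!: lattice_span_mono)
  ultimately show ?case
    using semL_Min_unfold[of X p \<rho>] unfolding M_def by auto
next
  case (Max X p)
  define M where "M = semL (Max X p) \<rho>"
  have "residual a (semL p (\<rho>(X := M))) \<in> lattice_span (G \<union> subformula_sems p (\<rho>(X := M)))"
    by (rule Max.IH) (use Max.prems in auto)
  moreover have "lattice_span (G \<union> subformula_sems p (\<rho>(X := M)))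
      \<subseteq> lattice_span (G \<union> subformula_sems (Max X p) \<rho>)"
    unfolding M_def by (auto intro!: lattice_span_mono)
  ultimately show ?case
    using semL_Max_unfold[of X p \<rho>] unfolding M_def by auto
next
  case (Var X)
  then show ?case
    using lattice_span_mono[of G "G \<union> subformula_sems (Var X) \<rho>"] by auto
qed (simp_all add: lattice_span.top lattice_span.bot)

lemma residuals_subformula_sems_in_lattice_span:
  assumes "guarded q" and "\<And>X a. X \<in> fv q \<Longrightarrow> residual a (\<rho> X) \<in> lattice_span G"
  shows "\<forall>S \<in> subformula_sems q \<rho>. \<forall>a. residual a S \<in> lattice_span (G \<union> subformula_sems q \<rho>)"
  using assms
proof (induction q arbitrary: \<rho> G)
  let ?claim = "\<lambda>q \<rho> G H. \<forall>S \<in> subformula_sems q \<rho>. \<forall>a. residual a S \<in> lattice_span (G \<union> H)"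
  have top: "residual b (semL q \<rho>) \<in> lattice_span (G \<union> subformula_sems q \<rho>)"
    if "guarded q" "\<And>X a. X \<in> fv q \<Longrightarrow> residual a (\<rho> X) \<in> lattice_span G" for q \<rho> G b
    using that ufv_subset_fv by (blast intro: residual_semL_in_lattice_span)
  have child: "?claim q \<rho> G H"
    if "?claim q \<rho> G (subformula_sems q \<rho>)" "subformula_sems q \<rho> \<subseteq> H" for q \<rho> G H
    using that lattice_span_mono[of "G \<union> subformula_sems q \<rho>" "G \<union> H"] by blast
  {
    case (Or p q)
    let ?H = "subformula_sems (Or p q) \<rho>"
    have "?claim p \<rho> G ?H" "?claim q \<rho> G ?H"
      by (rule child, rule Or.IH; use Or.prems in auto)+
    then show ?case
      using top[of "Or p q" \<rho> G, OF Or.prems] by auto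
  next
    case (And p q)
    let ?H = "subformula_sems (And p q) \<rho>"
    have "?claim p \<rho> G ?H" "?claim q \<rho> G ?H"
      by (rule child, rule And.IH; use And.prems in auto)+
    then show ?case
      using top[of "And p q" \<rho> G, OF And.prems] by auto
  next
    case (Dia A p)
    have "?claim p \<rho> G (subformula_sems (Dia A p) \<rho>)"
      by (rule child, rule Dia.IH; use Dia.prems in auto)
    then show ?case
      using top[of "Dia A p" \<rho> G, OF Dia.prems] by auto
  next
    case (Box A p)
    have "?claim p \<rho> G (subformula_sems (Box A p) \<rho>)"
      by (rule child, rule Box.IH; use Box.prems in auto)
    then show ?case
      using top[of "Box A p" \<rho> G, OF Box.prems] by auto
  next
    case (Min X p)
    define M where "M = semL (Min X p) \<rho>"
    define H where "H = G \<union> subformula_sems (Min X p) \<rho>"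
    have resM: "residual b M \<in> lattice_span H" for b
      unfolding M_def H_def by (rule top[of "Min X p" \<rho> G, OF Min.prems])
    have "?claim p (\<rho>(X := M)) H (subformula_sems p (\<rho>(X := M)))"
      using Min.prems resM lattice_span_mono[of G H] by (intro Min.IH) (auto simp: H_def)
    moreover have "subformula_sems p (\<rho>(X := M)) \<subseteq> H"
      unfolding H_def M_def by auto
    ultimately show ?case
      using resM unfolding H_def M_def by (simp add: Un_absorb2)
  next
    case (Max X p)
    define M where "M = semL (Max X p) \<rho>"
    define H where "H = G \<union> subformula_sems (Max X p) \<rho>"
    have resM: "residual b M \<in> lattice_span H" for b
      unfolding M_def H_def by (rule top[of "Max X p" \<rho> G, OF Max.prems])
    have "?claim p (\<rho>(X := M)) H (subformula_sems p (\<rho>(X := M)))"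
      using Max.prems resM lattice_span_mono[of G H] by (intro Max.IH) (auto simp: H_def)
    moreover have "subformula_sems p (\<rho>(X := M)) \<subseteq> H"
      unfolding H_def M_def by auto
    ultimately show ?case
      using resM unfolding H_def M_def by (simp add: Un_absorb2)
  next
    case (Var X)
    show ?case
      using Var.prems(2) lattice_span_mono[of G "G \<union> subformula_sems (Var X) \<rho>"] by auto
  }
qed (simp_all add: lattice_span.top lattice_span.bot)

lemma residual_lattice_span_subformula_sems:
  assumes "guarded q" "closed q" "S \<in> lattice_span (subformula_sems q \<rho>)"
  shows "residual a S \<in> lattice_span (subformula_sems q \<rho>)"
  using assms(3)
proof (rule residual_lattice_span)
  show "residual a T \<in> lattice_span (subformula_sems q \<rho>)" if "T \<in> subformula_sems q \<rho>" for T
    using residuals_subformula_sems_in_lattice_span[of q \<rho> "{}"] assms(1,2) that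
    by (simp add: closed_def)
qed

section \<open>Characteristic sHML formulas of safety sets\<close>

fun Box_each :: "'a list \<Rightarrow> ('a \<Rightarrow> 'a hml) \<Rightarrow> 'a hml" where
  "Box_each [] F = TT"
| "Box_each (a # as) F = And (Box {a} (F a)) (Box_each as F)"

lemma Box_each_syntax:
  "fv (Box_each as F) = (\<Union>a \<in> set as. fv (F a))"
  "ufv (Box_each as F) = {}"
  "guarded (Box_each as F) \<longleftrightarrow> (\<forall>a \<in> set as. guarded (F a))"
  "sHML (Box_each as F) \<longleftrightarrow> (\<forall>a \<in> set as. sHML (F a))"
  by (induction as) auto

lemma semL_Box_each:
  "semL (Box_each as F) \<sigma> = {t. shd t \<in> set as \<longrightarrow> stl t \<in> semL (F (shd t)) \<sigma>}"
  by (induction as) auto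

text \<open>Unfolding of the residual automaton from \<open>S\<close>: a set \<open>T \<in> V\<close> is already bound, to the
  variable \<open>ix T\<close>, and the fuel \<open>k\<close> never runs out as long as \<open>card (R - V) \<le> k\<close>.\<close>

fun char_formula ::
  "('a stream set \<Rightarrow> nat) \<Rightarrow> 'a list \<Rightarrow> nat \<Rightarrow> 'a stream set set \<Rightarrow> 'a stream set \<Rightarrow> 'a hml"
where
  "char_formula ix as 0 V S = (if S = {} then FF else if S \<in> V then Var (ix S) else TT)"
| "char_formula ix as (Suc k) V S = (if S = {} then FF else if S \<in> V then Var (ix S) else
     Max (ix S) (Box_each as (\<lambda>a. char_formula ix as k (insert S V) (residual a S))))"

lemma fv_char_formula: "fv (char_formula ix as k V S) \<subseteq> ix ` V"
proof (induction k arbitrary: V S)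
  case (Suc k)
  have "fv (char_formula ix as k (insert S V) (residual a S)) - {ix S} \<subseteq> ix ` V" for a
    using Suc.IH[of "insert S V"] by blast
  then show ?case
    by (auto simp: Box_each_syntax)
qed simp

lemma guarded_char_formula: "guarded (char_formula ix as k V S)"
  by (induction k arbitrary: V S) (simp_all add: Box_each_syntax)

lemma sHML_char_formula: "sHML (char_formula ix as k V S)"
  by (induction k arbitrary: V S) (simp_all add: Box_each_syntax)

locale residual_automaton =
  fixes R :: "'a stream set set" and ix :: "'a stream set \<Rightarrow> nat" and acts :: "'a list"
  assumes finite_R: "finite R"
    and residual_closed: "\<And>S a. S \<in> R \<Longrightarrow> residual a S \<in> R"
    and inj_ix: "inj_on ix R"
    and set_acts: "set acts = UNIV"
begin

abbreviation "\<chi> \<equiv> char_formula ix acts"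

lemma semL_char_formula_Suc:
  "S \<noteq> {} \<Longrightarrow> S \<notin> V \<Longrightarrow> semL (\<chi> (Suc k) V S) \<sigma> =
     \<Union>{P. P \<subseteq> {t. stl t \<in> semL (\<chi> k (insert S V) (residual (shd t) S)) (\<sigma>(ix S := P))}}"
  by (simp add: semL_Box_each set_acts)

lemma card_Diff_insert_le:
  "S \<in> R \<Longrightarrow> S \<notin> V \<Longrightarrow> card (R - V) \<le> Suc k \<Longrightarrow> card (R - insert S V) \<le> k"
  using finite_R by (simp add: card_Diff_singleton flip: Diff_insert2)

lemma mem_if_card_Diff_0: "S \<in> R \<Longrightarrow> card (R - V) \<le> 0 \<Longrightarrow> S \<in> V"
  using finite_R by auto

lemma ball_insert_fun_upd_ix:
  assumes "V \<subseteq> R" "S \<in> R" "S \<notin> V" "\<forall>T\<in>V. Q T (\<sigma> (ix T))" "Q S P"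
  shows "\<forall>T\<in>insert S V. Q T ((\<sigma>(ix S := P)) (ix T))"
proof -
  have "ix T \<noteq> ix S" if "T \<in> V" for T
    using assms(1-3) that inj_ix by (auto dest: inj_onD)
  then show ?thesis
    using assms(4,5) by auto
qed

lemma subset_semL_char_formula:
  assumes "S \<in> R" "V \<subseteq> R" "card (R - V) \<le> k" "\<forall>T\<in>V. T \<subseteq> \<sigma> (ix T)"
  shows "S \<subseteq> semL (\<chi> k V S) \<sigma>"
  using assms
proof (induction k arbitrary: V S \<sigma>)
  case 0
  then show ?case
    using mem_if_card_Diff_0 by auto
next
  case (Suc k)
  show ?case
  proof (cases "S = {} \<or> S \<in> V")
    case True
    then show ?thesis
      using Suc.prems by auto
  next
    case False
    then have S_ne: "S \<noteq> {}" and S_new: "S \<notin> V"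
      by auto
    let ?\<sigma> = "\<sigma>(ix S := S)"
    have "residual a S \<subseteq> semL (\<chi> k (insert S V) (residual a S)) ?\<sigma>" for a
    proof (rule Suc.IH)
      show "\<forall>T\<in>insert S V. T \<subseteq> ?\<sigma> (ix T)"
        using Suc.prems S_new by (intro ball_insert_fun_upd_ix) auto
    qed (use Suc.prems S_new residual_closed card_Diff_insert_le in auto)
    moreover have "stl t \<in> residual (shd t) S" if "t \<in> S" for t
      using that by (simp add: residual_def)
    ultimately have "S \<subseteq> {t. stl t \<in> semL (\<chi> k (insert S V) (residual (shd t) S)) ?\<sigma>}"
      by blast
    then show ?thesis
      unfolding semL_char_formula_Suc[OF S_ne S_new] by blast
  qed
qed

lemma semL_char_formula_subset_cylinder:
  assumes "S \<in> R" "V \<subseteq> R" "card (R - V) \<le> k" "\<forall>T\<in>V. \<sigma> (ix T) \<subseteq> cylinder m T"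
  shows "semL (\<chi> k V S) \<sigma> \<subseteq> cylinder m S"
  using assms
proof (induction k arbitrary: V S \<sigma> m)
  case 0
  then show ?case
    using mem_if_card_Diff_0 by auto
next
  case (Suc k)
  note outer_IH = Suc.IH and outer_prems = Suc.prems
  show ?case
  proof (cases "S = {} \<or> S \<in> V")
    case True
    then show ?thesis
      using Suc.prems by auto
  next
    case False
    then have S_ne: "S \<noteq> {}" and S_new: "S \<notin> V"
      by auto
    have "P \<subseteq> cylinder n S"
      if P: "P \<subseteq> {t. stl t \<in> semL (\<chi> k (insert S V) (residual (shd t) S)) (\<sigma>(ix S := P))}"
        and "n \<le> m" for P n
      using \<open>n \<le> m\<close>
    proof (induction n)
      case 0
      then show ?case
        using S_ne by (simp add: cylinder_0)
    next
      case (Suc n)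
      have "\<forall>T\<in>V. \<sigma> (ix T) \<subseteq> cylinder n T"
        using outer_prems(4) Suc.prems cylinder_antimono[of n m] by fastforce
      then have IH: "semL (\<chi> k (insert S V) (residual a S)) (\<sigma>(ix S := P)) \<subseteq> cylinder n (residual a S)"
        for a
        using Suc outer_prems S_new residual_closed card_Diff_insert_le
        by (intro outer_IH ball_insert_fun_upd_ix) auto
      show "P \<subseteq> cylinder (Suc n) S"
      proof
        fix t assume "t \<in> P"
        then have "stl t \<in> semL (\<chi> k (insert S V) (residual (shd t) S)) (\<sigma>(ix S := P))"
          using P by blast
        then show "t \<in> cylinder (Suc n) S"
          using IH[of "shd t"] by (auto simp: mem_cylinder_Suc)
      qed
    qed
    then show ?thesis
      unfolding semL_char_formula_Suc[OF S_ne S_new] by (blast intro: order_refl)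
  qed
qed

lemma semC_char_formula:
  assumes "S \<in> R" "safety S"
  shows "semC (\<chi> (card R) {} S) = S"
proof (rule equalityI)
  have "semC (\<chi> (card R) {} S) \<subseteq> cylinder m S" for m
    unfolding semC_def by (rule semL_char_formula_subset_cylinder) (use assms in auto)
  then have "semC (\<chi> (card R) {} S) \<subseteq> prefix_closure S"
    unfolding prefix_closure_def by (rule INT_greatest)
  with assms(2) show "semC (\<chi> (card R) {} S) \<subseteq> S"
    unfolding safety_def by blast
  show "S \<subseteq> semC (\<chi> (card R) {} S)"
    unfolding semC_def by (rule subset_semL_char_formula) (use assms in auto)
qed

end

lemma sHML_if_safety_finite_residuals:
  fixes L :: "('a::finite) stream set"
  assumes "finite R" "L \<in> R" "\<And>S a. S \<in> R \<Longrightarrow> residual a S \<in> R" "safety L"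
  shows "\<exists>\<psi>. sHML \<psi> \<and> guarded \<psi> \<and> closed \<psi> \<and> semC \<psi> = L"
proof -
  obtain ix :: "'a stream set \<Rightarrow> nat" where "inj_on ix R"
    using finite_imp_inj_to_nat_seg[OF assms(1)] by blast
  moreover obtain acts :: "'a list" where "set acts = UNIV"
    using finite_list[of "UNIV :: 'a set"] by auto
  ultimately interpret residual_automaton R ix acts
    using assms by unfold_locales auto
  have "fv (char_formula ix acts (card R) {} L) = {}"
    using fv_char_formula[of ix acts "card R" "{}" L] by simp
  then show ?thesis
    using semC_char_formula[OF assms(2,4)]
    by (intro exI[of _ "char_formula ix acts (card R) {} L"])
      (simp add: closed_def guarded_char_formula sHML_char_formula)
qed

lemma sHML_if_maxHML:
  fixes \<phi> :: "('a::finite) hml"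
  assumes "maxHML \<phi>" "guarded \<phi>" "closed \<phi>"
  shows "\<exists>\<psi>. sHML \<psi> \<and> guarded \<psi> \<and> closed \<psi> \<and> semC \<psi> = semC \<phi>"
proof (rule sHML_if_safety_finite_residuals)
  let ?R = "lattice_span (subformula_sems \<phi> (\<lambda>_. {}))"
  show "finite ?R"
    by (intro finite_lattice_span finite_subformula_sems)
  show "semC \<phi> \<in> ?R"
    unfolding semC_def by (intro lattice_span.base semL_in_subformula_sems)
  show "residual a S \<in> ?R" if "S \<in> ?R" for S a
    using assms(2,3) that by (rule residual_lattice_span_subformula_sems)
  show "safety (semC \<phi>)"
    unfolding semC_def using assms(1) by (rule safety_semL) (simp add: safety_empty)
qed

theorem mainTheorem15:
  fixes \<phi> :: "('a::finite) hml"
  assumes "guarded \<phi>" and "closed \<phi>"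
  shows "(maxHML \<phi> \<longrightarrow> (\<exists>\<psi>. sHML \<psi> \<and> guarded \<psi> \<and> closed \<psi> \<and> semC \<psi> = semC \<phi>))
       \<and> (minHML \<phi> \<longrightarrow> (\<exists>\<psi>. cHML \<psi> \<and> guarded \<psi> \<and> closed \<psi> \<and> semC \<psi> = semC \<phi>))"
proof (intro conjI impI)
  assume "maxHML \<phi>"
  with assms show "\<exists>\<psi>. sHML \<psi> \<and> guarded \<psi> \<and> closed \<psi> \<and> semC \<psi> = semC \<phi>"
    by (intro sHML_if_maxHML)
next
  assume "minHML \<phi>"
  then obtain \<psi> where \<psi>: "sHML \<psi>" "guarded \<psi>" "closed \<psi>" "semC \<psi> = semC (dual \<phi>)"
    using sHML_if_maxHML[of "dual \<phi>"] assms by auto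
  have "semC (dual \<psi>) = semC \<phi>"
    using semC_dual[OF \<psi>(3)] semC_dual[OF assms(2)] \<psi>(4) by simp
  with \<psi> show "\<exists>\<psi>. cHML \<psi> \<and> guarded \<psi> \<and> closed \<psi> \<and> semC \<psi> = semC \<phi>"
    by (intro exI[of _ "dual \<psi>"]) simp
qed

end
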